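(* Under the standing setup with $\gamma>0$ and $s_1=\dots=s_n=0$ (so Georgia's strategy set is $\{0\}$ and Hank's is $[0,1]$), define $\tilde q(0,0)=\beta-\beta\lambda-\chi\gamma$, $\tilde q(0,1)=(\gamma-\chi)\gamma+(\beta-2\gamma)(1-\lambda)$ and $\tilde r(0)=\frac{1-\lambda-\sqrt{(1-\lambda)(1-\lambda-\beta)+\chi\gamma}}{\gamma}$. Then the Nash equilibrium of the zero-sum game (Georgia minimizing $f$, Hank maximizing $f$) is $(0,1)$ if $\tilde q(0,1)\ge0$; $(0,0)$ if $\tilde q(0,0)\le0$; and $(0,\tilde r(0))$ otherwise.
   Context: Standing setup. Fix $n\in\mathbb N$ and $W=[w_{ij}]\in\mathbb R^{n\times n}$ with $w_{ij}\ge0$, $w_{ii}=0$. Let $\|W\|_\infty=\max_i\sum_j|w_{ij}|$, $\|W\|_1=\max_j\sum_i|w_{ij}|$, let $\lambda$ be the spectral radius of $W$, and assume there is $c\in\mathbb R^n$ with all entries positive and $W^\top c=\lambda c$. Fix $\beta\ge\gamma\ge0$ with $1-\max\{\|W\|_\infty,\|W\|_1\}>\max\{2\beta,4\gamma\}$. Fix innate opinions $s\in[0,1]^n$, $\overline s=\max_is_i$, $\underline s=\min_is_i$; Georgia chooses $g\in[0,\underline s]$, Hank chooses $h\in[\overline s,1]$. Set $\widehat c_i=c_i/\sum_jc_j$, $\widehat s=\sum_i\widehat c_is_i$, $\chi=\sum_i\widehat c_is_i\sum_jw_{ij}$. Define $$f(g,h)=\frac{(1-2\beta+(h-g)\gamma)\widehat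 s-\chi+(h+g)\beta+(g^2-h^2)\gamma}{1-\lambda+(g-h)\gamma}\,c^\top\mathbf 1$$ (the centrality-weighted steady state of the opinion dynamics with source opinions $g,h$). *)

theory Defs
  imports "HOL-Analysis.Analysis" "Jordan_Normal_Form.Spectral_Radius"
begin

(* Matrices are n x n, given as functions on indices 0..n-1 *)

definition norm_inf :: "nat \<Rightarrow> (nat \<Rightarrow> nat \<Rightarrow> real) \<Rightarrow> real" where
  "norm_inf n W = Max ((\<lambda>i. \<Sum>j<n. \<bar>W i j\<bar>) ` {..<n})"

definition norm_one :: "nat \<Rightarrow> (nat \<Rightarrow> nat \<Rightarrow> real) \<Rightarrow> real" where
  "norm_one n W = Max ((\<lambda>j. \<Sum>i<n. \<bar>W i j\<bar>) ` {..<n})"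

definition cmat :: "nat \<Rightarrow> (nat \<Rightarrow> nat \<Rightarrow> real) \<Rightarrow> complex mat" where
  "cmat n W = mat n n (\<lambda>(i,j). complex_of_real (W i j))"

definition chat :: "nat \<Rightarrow> (nat \<Rightarrow> real) \<Rightarrow> nat \<Rightarrow> real" where
  "chat n c i = c i / (\<Sum>j<n. c j)"

definition shat :: "nat \<Rightarrow> (nat \<Rightarrow> real) \<Rightarrow> (nat \<Rightarrow> real) \<Rightarrow> real" where
  "shat n c s = (\<Sum>i<n. chat n c i * s i)"

definition chi :: "nat \<Rightarrow> (nat \<Rightarrow> nat \<Rightarrow> real) \<Rightarrow> (nat \<Rightarrow> real) \<Rightarrow> (nat \<Rightarrow> real) \<Rightarrow> real" where
  "chi n W c s = (\<Sum>i<n. chat n c i * s i * (\<Sum>j<n. W i j))"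

(* centrality-weighted steady state f(g,h) *)
definition fval :: "nat \<Rightarrow> (nat \<Rightarrow> nat \<Rightarrow> real) \<Rightarrow> (nat \<Rightarrow> real) \<Rightarrow> (nat \<Rightarrow> real)
    \<Rightarrow> real \<Rightarrow> real \<Rightarrow> real \<Rightarrow> real \<Rightarrow> real \<Rightarrow> real" where
  "fval n W c s lam \<beta> \<gamma> g h =
     ((1 - 2*\<beta> + (h - g)*\<gamma>) * shat n c s - chi n W c s + (h + g)*\<beta> + (g^2 - h^2)*\<gamma>)
     / (1 - lam + (g - h)*\<gamma>) * (\<Sum>i<n. c i)"

definition is_NE :: "real set \<Rightarrow> real set \<Rightarrow> (real \<Rightarrow> real \<Rightarrow> real) \<Rightarrow> real \<times> real \<Rightarrow> bool" where
  "is_NE G H F p \<longleftrightarrow> fst p \<in> G \<and> snd p \<in> H \<and>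
     (\<forall>g\<in>G. F (fst p) (snd p) \<le> F g (snd p)) \<and>
     (\<forall>h\<in>H. F (fst p) h \<le> F (fst p) (snd p))"

end

theory Submission
  imports Defs
begin

text \<open>With all innate opinions zero, Georgia can only play 0 and the steady state reduces to
  \<open>f(0,h) = (\<beta>h - \<gamma>h\<^sup>2)/(a - \<gamma>h) \<cdot> c\<^sup>T\<one>\<close> with \<open>a = 1 - \<lambda>\<close>. Comparing two values of this
  function gives \<open>f(0,t) - f(0,k)\<close> the sign of \<open>(t - k)((a - \<gamma>t)(a - \<gamma>k) - a(a - \<beta>))\<close>, so Hank's
  best reply is the point where \<open>(a - \<gamma>h)\<^sup>2\<close> drops to \<open>a(a - \<beta>)\<close>, clipped to \<open>h \<le> 1\<close>.
  The bound \<open>\<lambda> \<le> \<parallel>W\<parallel>\<^sub>\<infinity>\<close>, read off the left eigenvector \<open>c\<close>, keeps all denominators positive.\<close>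

lemma left_eigenvalue_weighted_row_sums:
  fixes W :: "nat \<Rightarrow> nat \<Rightarrow> real"
  assumes "\<forall>j<n. (\<Sum>i<n. W i j * c i) = lam * c j"
  shows "lam * (\<Sum>i<n. c i) = (\<Sum>i<n. c i * (\<Sum>j<n. W i j))"
proof -
  have "lam * (\<Sum>i<n. c i) = (\<Sum>j<n. \<Sum>i<n. W i j * c i)"
    using assms by (simp add: sum_distrib_left)
  also have "\<dots> = (\<Sum>i<n. \<Sum>j<n. W i j * c i)" by (rule sum.swap)
  also have "\<dots> = (\<Sum>i<n. c i * (\<Sum>j<n. W i j))" by (simp add: sum_distrib_left mult.commute)
  finally show ?thesis .
qed

lemma left_eigenvalue_bounds:
  fixes W :: "nat \<Rightarrow> nat \<Rightarrow> real"
  assumes "n \<ge> 1" and W_nonneg: "\<forall>i<n. \<forall>j<n. W i j \<ge> 0" and c_pos: "\<forall>i<n. c i > 0"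
    and "\<forall>j<n. (\<Sum>i<n. W i j * c i) = lam * c j"
  shows "0 \<le> lam" "lam \<le> norm_inf n W"
proof -
  define C where "C = (\<Sum>i<n. c i)"
  have C_pos: "C > 0"
    unfolding C_def using c_pos \<open>n \<ge> 1\<close> by (intro sum_pos) (auto simp: lessThan_empty_iff)
  have eq: "lam * C = (\<Sum>i<n. c i * (\<Sum>j<n. W i j))"
    unfolding C_def using assms(4) by (rule left_eigenvalue_weighted_row_sums)
  have row_le: "(\<Sum>j<n. W i j) \<le> norm_inf n W" if "i < n" for i
  proof -
    have "(\<Sum>j<n. W i j) = (\<Sum>j<n. \<bar>W i j\<bar>)" using W_nonneg that by (intro sum.cong) auto
    also have "\<dots> \<le> norm_inf n W" unfolding norm_inf_def using that by (intro Max_ge) auto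
    finally show ?thesis .
  qed
  have "lam * C \<le> (\<Sum>i<n. c i * norm_inf n W)"
    unfolding eq using c_pos row_le by (intro sum_mono mult_left_mono) (auto intro: less_imp_le)
  also have "\<dots> = norm_inf n W * C" unfolding C_def by (simp add: sum_distrib_left mult.commute)
  finally show "lam \<le> norm_inf n W" using C_pos by simp
  have "lam * C \<ge> 0" unfolding eq using c_pos W_nonneg
    by (intro sum_nonneg mult_nonneg_nonneg) (auto intro: sum_nonneg less_imp_le)
  then show "0 \<le> lam" using C_pos by (simp add: zero_le_mult_iff)
qed

lemma is_NE_singleton_strict_max:
  assumes "t \<in> H" and "\<forall>k\<in>H. k \<noteq> t \<longrightarrow> F g k < F g t"
  shows "{p. is_NE {g} H F p} = {(g, t)}"
  using assms unfolding is_NE_def by (force simp: not_less[symmetric])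

definition zero_innate_payoff :: "real \<Rightarrow> real \<Rightarrow> real \<Rightarrow> real \<Rightarrow> real" where
  "zero_innate_payoff a \<beta> \<gamma> h = (\<beta>*h - \<gamma>*h^2) / (a - \<gamma>*h)"

lemma fval_zero_innate:
  assumes "\<forall>i<n. s i = 0"
  shows "fval n W c s lam \<beta> \<gamma> 0 h = zero_innate_payoff (1 - lam) \<beta> \<gamma> h * (\<Sum>i<n. c i)"
proof -
  have "shat n c s = 0" "chi n W c s = 0" unfolding shat_def chi_def using assms by simp_all
  then show ?thesis unfolding fval_def zero_innate_payoff_def by (simp add: algebra_simps)
qed

lemma zero_innate_payoff_less:
  assumes "a - \<gamma>*t > 0" "a - \<gamma>*k > 0"
    and "(t - k) * ((a - \<gamma>*t)*(a - \<gamma>*k) - a*(a - \<beta>)) > 0"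
  shows "zero_innate_payoff a \<beta> \<gamma> k < zero_innate_payoff a \<beta> \<gamma> t"
proof -
  have "zero_innate_payoff a \<beta> \<gamma> t - zero_innate_payoff a \<beta> \<gamma> k
      = (t - k) * ((a - \<gamma>*t)*(a - \<gamma>*k) - a*(a - \<beta>)) / ((a - \<gamma>*t)*(a - \<gamma>*k))"
    using assms(1,2) unfolding zero_innate_payoff_def
    by (simp add: field_simps) (simp add: algebra_simps power2_eq_square)
  also have "\<dots> > 0" using assms by simp
  finally show ?thesis by simp
qed

lemma zero_innate_payoff_max_at_one:
  assumes "\<gamma> > 0" "a > \<gamma>" "(a - \<gamma>)^2 \<ge> a*(a - \<beta>)" "0 \<le> k" "k < 1"
  shows "zero_innate_payoff a \<beta> \<gamma> k < zero_innate_payoff a \<beta> \<gamma> 1"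
proof (rule zero_innate_payoff_less)
  have "(a - \<gamma>)*(a - \<gamma>*k) > (a - \<gamma>)*(a - \<gamma>)"
    using assms by (intro mult_strict_left_mono) auto
  then have "(a - \<gamma>*1)*(a - \<gamma>*k) - a*(a - \<beta>) > 0"
    using assms(3) by (simp add: power2_eq_square)
  then show "(1 - k) * ((a - \<gamma>*1)*(a - \<gamma>*k) - a*(a - \<beta>)) > 0"
    using assms(5) by simp
  show "a - \<gamma>*k > 0" using assms by (smt (verit) mult_left_le)
qed (use assms in simp)

lemma zero_innate_payoff_max_interior:
  fixes a \<beta> \<gamma> :: real
  defines "r \<equiv> (a - sqrt (a*(a - \<beta>))) / \<gamma>"
  assumes "\<gamma> > 0" "a > \<gamma>" "\<beta> > 0" "a > \<beta>" "(a - \<gamma>)^2 < a*(a - \<beta>)"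
  shows "0 \<le> r" "r \<le> 1"
    and "\<forall>k\<in>{0..1}. k \<noteq> r \<longrightarrow> zero_innate_payoff a \<beta> \<gamma> k < zero_innate_payoff a \<beta> \<gamma> r"
proof -
  define \<rho> where "\<rho> = sqrt (a*(a - \<beta>))"
  have \<rho>_sq: "\<rho>*\<rho> = a*(a - \<beta>)" unfolding \<rho>_def using assms by simp
  have "a*(a - \<beta>) < a^2" using assms by (simp add: power2_eq_square algebra_simps)
  then have \<rho>_lt: "\<rho> < a" unfolding \<rho>_def using assms
    by (metis less_trans real_sqrt_less_mono real_sqrt_abs abs_of_pos)
  have "\<bar>a - \<gamma>\<bar> < \<rho>" unfolding \<rho>_def using assms(6) real_sqrt_less_mono by fastforce
  then have \<rho>_gt: "a - \<gamma> < \<rho>" by simp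
  have at_r: "a - \<gamma>*r = \<rho>" unfolding r_def \<rho>_def using assms by simp
  show "0 \<le> r" unfolding r_def \<rho>_def[symmetric] using \<rho>_lt assms by simp
  show "r \<le> 1" unfolding r_def \<rho>_def[symmetric] using \<rho>_gt assms by (simp add: divide_le_eq)
  show "\<forall>k\<in>{0..1}. k \<noteq> r \<longrightarrow> zero_innate_payoff a \<beta> \<gamma> k < zero_innate_payoff a \<beta> \<gamma> r"
  proof (intro ballI impI zero_innate_payoff_less)
    fix k :: real assume k: "k \<in> {0..1}" "k \<noteq> r"
    show "a - \<gamma>*k > 0" using k assms(2,3) by (smt (verit) atLeastAtMost_iff mult_left_le)
    have "(r - k) * ((a - \<gamma>*r)*(a - \<gamma>*k) - a*(a - \<beta>)) = \<rho>*\<gamma>*(r - k)^2"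
      using at_r \<rho>_sq by (simp add: algebra_simps power2_eq_square)
    moreover have "\<rho>*\<gamma>*(r - k)^2 > 0" using k(2) \<rho>_gt assms(2,3) by simp
    ultimately show "(r - k) * ((a - \<gamma>*r)*(a - \<gamma>*k) - a*(a - \<beta>)) > 0" by simp
  qed (use at_r \<rho>_gt assms(3) in simp)
qed

theorem corollary4:
  fixes n :: nat and W :: "nat \<Rightarrow> nat \<Rightarrow> real" and c s :: "nat \<Rightarrow> real"
    and \<beta> \<gamma> :: real
  defines "lam \<equiv> spectral_radius (cmat n W)"
  defines "smin \<equiv> Min (s ` {..<n})" and "smax \<equiv> Max (s ` {..<n})"
  defines "F \<equiv> fval n W c s lam \<beta> \<gamma>"
  defines "chv \<equiv> chi n W c s"
  defines "q00 \<equiv> \<beta> - \<beta> * lam - chv * \<gamma>"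
  defines "q01 \<equiv> (\<gamma> - chv) * \<gamma> + (\<beta> - 2*\<gamma>) * (1 - lam)"
  defines "r0 \<equiv> (1 - lam - sqrt ((1 - lam) * (1 - lam - \<beta>) + chv * \<gamma>)) / \<gamma>"
  assumes n_pos: "n \<ge> 1"
    and W_nonneg: "\<forall>i<n. \<forall>j<n. W i j \<ge> 0"
    and W_diag: "\<forall>i<n. W i i = 0"
    and c_pos: "\<forall>i<n. c i > 0"
    and c_eig: "\<forall>j<n. (\<Sum>i<n. W i j * c i) = lam * c j"
    and \<beta>\<gamma>: "\<beta> \<ge> \<gamma>" "\<gamma> > 0"
    and norm_bound: "1 - max (norm_inf n W) (norm_one n W) > max (2*\<beta>) (4*\<gamma>)"
    and s_zero: "\<forall>i<n. s i = 0"
  shows "{p. is_NE {g. 0 \<le> g \<and> g \<le> smin} {h. smax \<le> h \<and> h \<le> 1} F p} =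
           (if q01 \<ge> 0 then {(0, 1)}
            else if q00 \<le> 0 then {(0, 0)}
            else {(0, r0)})"
proof -
  define a where "a = 1 - lam"
  define \<phi> where "\<phi> = zero_innate_payoff a \<beta> \<gamma>"
  have "s ` {..<n} = {0}" using s_zero n_pos by (auto intro!: image_eqI[where x = 0])
  then have strategies: "{g. 0 \<le> g \<and> g \<le> smin} = {0}" "{h. smax \<le> h \<and> h \<le> 1} = {0..1}"
    unfolding smin_def smax_def by auto
  have "chv = 0" unfolding chv_def chi_def using s_zero by simp
  have "0 \<le> lam" "lam \<le> norm_inf n W"
    using left_eigenvalue_bounds[OF n_pos W_nonneg c_pos c_eig] by auto
  then have a: "a > 2*\<beta>" "a > 4*\<gamma>" using norm_bound \<beta>\<gamma> unfolding a_def by auto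
  have C_pos: "(\<Sum>i<n. c i) > 0"
    using c_pos n_pos by (intro sum_pos) (auto simp: lessThan_empty_iff)
  have NE_at: "{p. is_NE {0} {0..1} F p} = {(0, t)}"
    if "t \<in> {0..1}" "\<forall>k\<in>{0..1}. k \<noteq> t \<longrightarrow> \<phi> k < \<phi> t" for t
    using that C_pos
    by (intro is_NE_singleton_strict_max) (simp_all add: F_def fval_zero_innate[OF s_zero] \<phi>_def a_def)
  \<comment> \<open>Here \<open>q00 = \<beta>(1 - \<lambda>) > 0\<close>, so the middle branch of the statement never applies.\<close>
  have "q00 > 0" unfolding q00_def \<open>chv = 0\<close> using a \<beta>\<gamma> by (simp add: algebra_simps a_def)
  have q01_eq: "q01 = (a - \<gamma>)^2 - a*(a - \<beta>)"
    unfolding q01_def \<open>chv = 0\<close> a_def by (simp add: algebra_simps power2_eq_square)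
  show ?thesis
  proof (cases "q01 \<ge> 0")
    case True
    then have "\<forall>k\<in>{0..1}. k \<noteq> 1 \<longrightarrow> \<phi> k < \<phi> 1"
      using zero_innate_payoff_max_at_one[of \<gamma> a \<beta>] a \<beta>\<gamma> q01_eq by (simp add: \<phi>_def)
    then show ?thesis using NE_at[of 1] True strategies by simp
  next
    case False
    have "r0 = (a - sqrt (a*(a - \<beta>))) / \<gamma>" unfolding r0_def \<open>chv = 0\<close> a_def by simp
    then have "r0 \<in> {0..1}" "\<forall>k\<in>{0..1}. k \<noteq> r0 \<longrightarrow> \<phi> k < \<phi> r0"
      using zero_innate_payoff_max_interior[of \<gamma> a \<beta>] a \<beta>\<gamma> False q01_eq
      by (simp_all add: \<phi>_def)
    then show ?thesis using NE_at False \<open>q00 > 0\<close> strategies by simp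
  qed
qed

end
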